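(* Let $A\in\mathbb{R}^{n\times n}$ with spectral radius $\rho(A)<1$, let $C\in\mathbb{R}^{m\times n}$, and let $Q\in\mathbb{R}^{n\times n}$, $R\in\mathbb{R}^{m\times m}$ be symmetric positive definite, with $(A,C)$ observable and $(A,Q^{1/2})$ controllable. Let $\bar P$ be the unique stabilizing positive definite solution of the discrete-time algebraic Riccati equation $$\bar P = A\bar PA^{\intercal}+Q-(A\bar PA^{\intercal}+Q)C^{\intercal}\big(C(A\bar PA^{\intercal}+Q)C^{\intercal}+R\big)^{-1}C(A\bar PA^{\intercal}+Q).$$ Let $\bar\gamma\in(0,1)$ and $\mu\in(0,1)$. Let $(\lambda_k)_{k\ge1}$ be i.i.d. $\{0,1\}$-valued random variables with $\mathbb{P}[\lambda_k=0]=\bar\gamma$, and let $(u_k)_{k\ge1}$ be i.i.d. $\{0,1\}$-valued random variables with $\mathbb{P}[u_k=0]=\mu$, the two sequences being independent of each other. Let $P_0$ be a fixed symmetric positive semidefinite matrix and define recursively, for $k\ge1$, $$P_k=\begin{cases}\bar P, & \text{if } (\lambda_k,u_k)=(1,1),\\ AP_{k-1}A^{\intercal}+Q, & \text{if } \lambda_k=0 \text{ or } (\lambda_k,u_k)=(1,0).\end{cases}$$ Set $q=\bar\gamma+(1-\bar\gamma)\mu$. Then $$\lim_{k\to\infty}\mathbb{E}[P_k]=(1-\bar\gamma)(1-\mu)\,W+q\,S,$$ where $W=L(\sqrt{q}\,A,\bar P)$ and $S=L(\sqrt{q}\,A,Q)$.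
   Context: For a square matrix $T$ with $\rho(T)<1$ and a symmetric matrix $U$, $L(T,U)$ denotes the unique solution $V$ of the discrete-time Lyapunov equation $V=TVT^{\intercal}+U$, equivalently $L(T,U)=\sum_{j=0}^{\infty}T^jU(T^{\intercal})^j$. Here $P_k$ models the estimation error covariance of a remote legitimate user that receives the sensor's steady-state Kalman estimate (error covariance $\bar P$) only when the packet arrives ($\lambda_k=1$) and the sensor did not send noise ($u_k=1$), and otherwise predicts with the model $x_{k+1}=Ax_k+w_k$, $\mathrm{Cov}(w_k)=Q$. *)

theory Defs
  imports "HOL-Analysis.Analysis" "HOL-Probability.Probability"
begin

primrec mpow :: "real^'n^'n \<Rightarrow> nat \<Rightarrow> real^'n^'n" where
  "mpow T 0 = mat 1"
| "mpow T (Suc k) = T ** mpow T k"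

definition sym_mat :: "real^'n^'n \<Rightarrow> bool" where
  "sym_mat X \<longleftrightarrow> transpose X = X"

definition pos_def :: "real^'n^'n \<Rightarrow> bool" where
  "pos_def X \<longleftrightarrow> sym_mat X \<and> (\<forall>x. x \<noteq> 0 \<longrightarrow> x \<bullet> (X *v x) > 0)"

definition pos_semidef :: "real^'n^'n \<Rightarrow> bool" where
  "pos_semidef X \<longleftrightarrow> sym_mat X \<and> (\<forall>x. x \<bullet> (X *v x) \<ge> 0)"

definition spectral_radius :: "real^'n^'n \<Rightarrow> real" where
  "spectral_radius A =
     Max {cmod z | z. det (mat z - map_matrix complex_of_real A) = 0}"

definition msqrt :: "real^'n^'n \<Rightarrow> real^'n^'n" where
  "msqrt Q = (THE B. pos_semidef B \<and> B ** B = Q)"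

text \<open>Observability of (A,C): the observability matrix [C; CA; ...; CA^(n-1)]
  has full column rank n, i.e. trivial kernel.\<close>
definition observable :: "real^'n^'n \<Rightarrow> real^'n^'m \<Rightarrow> bool" where
  "observable A C \<longleftrightarrow>
     (\<forall>x. (\<forall>k<CARD('n). C *v (mpow A k *v x) = 0) \<longrightarrow> x = 0)"

text \<open>Controllability of (A,B): the controllability matrix [B, AB, ..., A^(n-1)B]
  has full row rank n, i.e. its transpose has trivial kernel.\<close>
definition controllable :: "real^'n^'n \<Rightarrow> real^'p^'n \<Rightarrow> bool" where
  "controllable A B \<longleftrightarrow>
     (\<forall>y. (\<forall>k<CARD('n). y v* (mpow A k ** B) = 0) \<longrightarrow> y = 0)"

definition riccati :: "real^'n^'n \<Rightarrow> real^'n^'m \<Rightarrow> real^'n^'n \<Rightarrow> real^'m^'m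
    \<Rightarrow> real^'n^'n \<Rightarrow> real^'n^'n" where
  "riccati A C Q R P =
     (let M = A ** P ** transpose A + Q
      in M - M ** transpose C ** matrix_inv (C ** M ** transpose C + R) ** C ** M)"

definition kgain :: "real^'n^'n \<Rightarrow> real^'n^'m \<Rightarrow> real^'n^'n \<Rightarrow> real^'m^'m
    \<Rightarrow> real^'n^'n \<Rightarrow> real^'m^'n" where
  "kgain A C Q R P =
     (let M = A ** P ** transpose A + Q
      in M ** transpose C ** matrix_inv (C ** M ** transpose C + R))"

definition stabilizing :: "real^'n^'n \<Rightarrow> real^'n^'m \<Rightarrow> real^'n^'n \<Rightarrow> real^'m^'m
    \<Rightarrow> real^'n^'n \<Rightarrow> bool" where
  "stabilizing A C Q R P \<longleftrightarrow>
     spectral_radius (A ** (mat 1 - kgain A C Q R P ** C)) < 1"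

definition lyap :: "real^'n^'n \<Rightarrow> real^'n^'n \<Rightarrow> real^'n^'n" where
  "lyap T U = (THE V. V = T ** V ** transpose T + U)"

text \<open>Error covariance recursion of the remote user; index k \<ge> 1 uses lam k, u k.\<close>
primrec Pseq :: "real^'n^'n \<Rightarrow> real^'n^'n \<Rightarrow> real^'n^'n \<Rightarrow> real^'n^'n
    \<Rightarrow> (nat \<Rightarrow> 'a \<Rightarrow> nat) \<Rightarrow> (nat \<Rightarrow> 'a \<Rightarrow> nat) \<Rightarrow> nat \<Rightarrow> 'a \<Rightarrow> real^'n^'n" where
  "Pseq A Q Pbar P0 lam u 0 \<omega> = P0"
| "Pseq A Q Pbar P0 lam u (Suc k) \<omega> =
     (if lam (Suc k) \<omega> = 1 \<and> u (Suc k) \<omega> = 1 then Pbar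
      else A ** Pseq A Q Pbar P0 lam u k \<omega> ** transpose A + Q)"

end

theory Submission
  imports Defs "Jordan_Normal_Form.Spectral_Radius"
begin

(*
  Conditioning on the packet of step k+1, which is independent of P_k, the expected covariance
  E_k = E[P_k] satisfies the affine recursion
    E_{k+1} = p Pbar + q (A E_k A^T + Q) = T E_k T^T + (p Pbar + q Q),
  with p = 1 - q and T = sqrt q A.  Since rho(A) < 1, the powers of A are bounded (Jordan normal
  form), so T^k -> 0 and E_k converges to the unique fixed point L(T, p Pbar + q Q), which is
  linear in its second argument.
*)

no_notation Matrix.vec_index (infixl \<open>$\<close> 100)
notation Matrix.vec_index (infixl \<open>$v\<close> 100)
no_notation Matrix.scalar_prod (infix \<open>\<bullet>\<close> 70)
hide_const (open) Matrix.mat Matrix.vec Determinant.det Spectral_Radius.spectral_radius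

lemma matrix_add_rdistrib: "(B + C) ** A = B ** A + C ** (A :: 'a::semiring_1^_^_)"
  by (vector matrix_matrix_mult_def sum.distrib[symmetric] field_simps)

lemma bounded_bilinear_matrix_mult:
  "bounded_bilinear (\<lambda>(X :: real^'m^'n) (Y :: real^'p^'m). X ** Y)"
  unfolding bilinear_conv_bounded_bilinear[symmetric] bilinear_def
proof (intro conjI allI linearI)
  fix X X' :: "real^'m^'n" and Y Y' :: "real^'p^'m" and c :: real
  show "X ** (Y + Y') = X ** Y + X ** Y'" "(X + X') ** Y = X ** Y + X' ** Y"
    by (simp_all add: matrix_add_ldistrib matrix_add_rdistrib)
  show "X ** (c *\<^sub>R Y) = c *\<^sub>R (X ** Y)" "(c *\<^sub>R X) ** Y = c *\<^sub>R (X ** Y)"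
    by (simp_all only: matrix_scalar_ac scalar_matrix_assoc)
qed

lemmas matrix_mult_scaleR_left = bounded_bilinear.scaleR_left[OF bounded_bilinear_matrix_mult]
lemmas matrix_mult_scaleR_right = bounded_bilinear.scaleR_right[OF bounded_bilinear_matrix_mult]

lemma bounded_linear_transpose: "bounded_linear (transpose :: real^'m^'n \<Rightarrow> real^'n^'m)"
  unfolding linear_conv_bounded_linear[symmetric]
  by (rule linearI) (simp_all add: transpose_def Finite_Cartesian_Product.vec_eq_iff)

lemma linear_congruence: "linear (\<lambda>V. T ** V ** transpose (T :: real^'n^'n))"
  by (rule linearI)
    (simp_all add: matrix_add_ldistrib matrix_add_rdistrib matrix_mult_scaleR_left
      matrix_mult_scaleR_right)

lemma bounded_linear_congruence: "bounded_linear (\<lambda>V. T ** V ** transpose (T :: real^'n^'n))"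
  using linear_congruence unfolding linear_conv_bounded_linear .

lemma congruence_scaleR:
  "(c *\<^sub>R T) ** V ** transpose (c *\<^sub>R T) = (c * c) *\<^sub>R (T ** V ** transpose (T :: real^'n^'n))"
  by (simp add: transpose_scalar matrix_mult_scaleR_left matrix_mult_scaleR_right)

lemma mpow_Suc_right: "mpow T (Suc k) = mpow T k ** T"
  by (induction k) (simp_all add: matrix_mul_assoc)

lemma mpow_scaleR: "mpow (c *\<^sub>R T) k = c ^ k *\<^sub>R mpow T k"
  by (induction k) (simp_all add: matrix_mult_scaleR_left matrix_mult_scaleR_right)

section \<open>Cartesian matrices as matrices of the Jordan normal form library\<close>

definition cart_index :: "nat \<Rightarrow> 'n::finite" where
  "cart_index = (SOME f. bij_betw f {..<CARD('n)} UNIV)"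

lemma bij_betw_cart_index: "bij_betw (cart_index :: nat \<Rightarrow> 'n::finite) {..<CARD('n)} UNIV"
proof -
  have "\<exists>f :: nat \<Rightarrow> 'n. bij_betw f {..<CARD('n)} UNIV"
    using ex_bij_betw_nat_finite[of "UNIV :: 'n set"] by (simp add: atLeast0LessThan)
  then show ?thesis
    unfolding cart_index_def by (rule someI_ex)
qed

lemma cart_index_eq_iff:
  "i < CARD('n) \<Longrightarrow> j < CARD('n) \<Longrightarrow> (cart_index i = (cart_index j :: 'n::finite)) \<longleftrightarrow> i = j"
  using bij_betw_cart_index[where 'n='n] unfolding bij_betw_def inj_on_def by auto

lemma ex_cart_index: "\<exists>i < CARD('n). cart_index i = (a :: 'n::finite)"
  using bij_betw_cart_index[where 'n='n] unfolding bij_betw_def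
  by (metis UNIV_I imageE lessThan_iff)

lemma sum_cart_index: "(\<Sum>i<CARD('n). f (cart_index i)) = (\<Sum>a\<in>UNIV. f (a :: 'n::finite))"
  using sum.reindex_bij_betw[OF bij_betw_cart_index, of f] by simp

definition mat_of_cart :: "'a^'n^'n \<Rightarrow> 'a mat" where
  "mat_of_cart X = Matrix.mat CARD('n) CARD('n) (\<lambda>(i, j). X $ cart_index i $ cart_index j)"

definition vec_of_cart :: "'a^'n \<Rightarrow> 'a Matrix.vec" where
  "vec_of_cart x = Matrix.vec CARD('n) (\<lambda>i. x $ cart_index i)"

lemma mat_of_cart_carrier [simp]: "mat_of_cart (X :: 'a^'n^'n) \<in> carrier_mat CARD('n) CARD('n)"
  by (simp add: mat_of_cart_def)

lemma dim_mat_of_cart [simp]: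
  "dim_row (mat_of_cart (X :: 'a^'n^'n)) = CARD('n)"
  "dim_col (mat_of_cart (X :: 'a^'n^'n)) = CARD('n)"
  by (simp_all add: mat_of_cart_def)

lemma index_mat_of_cart [simp]:
  "i < CARD('n) \<Longrightarrow> j < CARD('n) \<Longrightarrow>
    mat_of_cart (X :: 'a^'n^'n) $$ (i, j) = X $ cart_index i $ cart_index j"
  by (simp add: mat_of_cart_def)

lemma vec_of_cart_carrier [simp]: "vec_of_cart (x :: 'a^'n) \<in> carrier_vec CARD('n)"
  by (simp add: vec_of_cart_def)

lemma dim_vec_of_cart [simp]: "dim_vec (vec_of_cart (x :: 'a^'n)) = CARD('n)"
  by (simp add: vec_of_cart_def)

lemma index_vec_of_cart [simp]: "i < CARD('n) \<Longrightarrow> vec_of_cart (x :: 'a^'n) $v i = x $ cart_index i"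
  by (simp add: vec_of_cart_def)

lemma mat_of_cart_mult:
  "mat_of_cart (X ** Y) = mat_of_cart X * mat_of_cart (Y :: 'a::comm_semiring_1^'n^'n)"
proof (rule eq_matI)
  fix i j
  assume "i < dim_row (mat_of_cart X * mat_of_cart Y)" "j < dim_col (mat_of_cart X * mat_of_cart Y)"
  then show "mat_of_cart (X ** Y) $$ (i, j) = (mat_of_cart X * mat_of_cart Y) $$ (i, j)"
    using sum_cart_index[of "\<lambda>a. X $ cart_index i $ a * Y $ a $ cart_index j"]
    by (simp add: scalar_prod_def matrix_matrix_mult_def atLeast0LessThan)
qed simp_all

lemma mat_of_cart_one: "mat_of_cart (mat 1 :: 'a::semiring_1^'n^'n) = 1\<^sub>m CARD('n)"
  by (rule eq_matI) (auto simp: Finite_Cartesian_Product.mat_def cart_index_eq_iff)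

lemma mat_of_cart_mult_vec:
  "mat_of_cart X *\<^sub>v vec_of_cart x = vec_of_cart (X *v (x :: 'a::comm_semiring_1^'n))"
proof (rule eq_vecI)
  fix i
  assume "i < dim_vec (vec_of_cart (X *v x))"
  then show "(mat_of_cart X *\<^sub>v vec_of_cart x) $v i = vec_of_cart (X *v x) $v i"
    using sum_cart_index[of "\<lambda>a. X $ cart_index i $ a * x $ a"]
    by (simp add: scalar_prod_def matrix_vector_mult_def atLeast0LessThan)
qed simp

lemma vec_of_cart_smult: "vec_of_cart (c *s x) = c \<cdot>\<^sub>v vec_of_cart (x :: 'a::times^'n)"
  by (rule eq_vecI) simp_all

lemma vec_of_cart_zero: "vec_of_cart (0 :: 'a::zero^'n) = 0\<^sub>v CARD('n)"
  by (rule eq_vecI) simp_all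

lemma vec_of_cart_inject: "vec_of_cart x = vec_of_cart y \<longleftrightarrow> x = (y :: 'a^'n)"
proof
  assume eq: "vec_of_cart x = vec_of_cart y"
  show "x = y"
  proof (rule Finite_Cartesian_Product.vec_eq_iff[THEN iffD2], rule allI)
    fix a :: 'n
    obtain i where "i < CARD('n)" "cart_index i = a"
      using ex_cart_index by blast
    then show "x $ a = y $ a"
      using arg_cong[OF eq, of "\<lambda>v. v $v i"] by simp
  qed
qed simp

lemma vec_of_cart_surj:
  assumes "v \<in> carrier_vec CARD('n)"
  shows "\<exists>x :: 'a^'n. v = vec_of_cart x"
proof
  show "v = vec_of_cart (\<chi> a. v $v inv_into {..<CARD('n)} cart_index a :: 'a^'n)"
    using assms by (intro eq_vecI) (auto simp: bij_betw_inv_into_left[OF bij_betw_cart_index])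
qed

lemma eigenvalue_mat_of_cart:
  "eigenvalue (mat_of_cart X) z \<longleftrightarrow> (\<exists>x. x \<noteq> 0 \<and> X *v x = z *s (x :: 'a::comm_ring_1^'n))"
proof
  assume "eigenvalue (mat_of_cart X) z"
  then obtain v where v: "v \<in> carrier_vec CARD('n)" "v \<noteq> 0\<^sub>v CARD('n)"
    "mat_of_cart X *\<^sub>v v = z \<cdot>\<^sub>v v"
    unfolding eigenvalue_def eigenvector_def by auto
  obtain x :: "'a^'n" where x: "v = vec_of_cart x"
    using vec_of_cart_surj[OF v(1)] by blast
  have "x \<noteq> 0"
    using v(2) x vec_of_cart_zero by auto
  moreover have "X *v x = z *s x"
    using v(3) unfolding x mat_of_cart_mult_vec vec_of_cart_smult[symmetric] vec_of_cart_inject .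
  ultimately show "\<exists>x. x \<noteq> 0 \<and> X *v x = z *s x"
    by blast
next
  assume "\<exists>x. x \<noteq> 0 \<and> X *v x = z *s x"
  then obtain x where "x \<noteq> 0" "X *v x = z *s x"
    by blast
  then have "eigenvector (mat_of_cart X) (vec_of_cart x) z"
    unfolding eigenvector_def
    by (simp add: mat_of_cart_mult_vec vec_of_cart_smult vec_of_cart_zero[symmetric]
        vec_of_cart_inject)
  then show "eigenvalue (mat_of_cart X) z"
    unfolding eigenvalue_def by blast
qed

lemma mat_mult_vector: "mat c *v x = c *s (x :: 'a::comm_ring_1^'n)"
  by (simp add: Finite_Cartesian_Product.vec_eq_iff matrix_vector_mult_def
      Finite_Cartesian_Product.mat_def if_distrib[of "\<lambda>y. y * _"] cong: if_cong)

lemma det_mat_diff_eq_0_iff: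
  "det (mat z - X) = 0 \<longleftrightarrow> (\<exists>x. x \<noteq> 0 \<and> X *v x = z *s (x :: 'a::field^'n))"
proof -
  have kernel: "(mat z - X) *v x = 0 \<longleftrightarrow> X *v x = z *s x" for x
    by (auto simp: matrix_vector_mult_diff_rdistrib mat_mult_vector)
  have "det (mat z - X) \<noteq> 0 \<longleftrightarrow> (\<forall>x. (mat z - X) *v x = 0 \<longrightarrow> x = 0)"
    by (simp add: invertible_det_nz[symmetric] invertible_left_inverse matrix_left_invertible_ker)
  then show ?thesis
    unfolding kernel by blast
qed

lemma spectral_radius_mat_of_cart:
  "Spectral_Radius.spectral_radius (mat_of_cart (map_matrix complex_of_real A)) = spectral_radius A"
  unfolding Spectral_Radius.spectral_radius_def spectrum_def Defs.spectral_radius_def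
    eigenvalue_mat_of_cart det_mat_diff_eq_0_iff
  by (simp add: image_Collect)

lemma map_matrix_of_real_mult:
  "map_matrix of_real (X ** Y) =
     (map_matrix of_real X ** map_matrix of_real (Y :: real^'p^'m) :: 'a::real_algebra_1^'p^'n)"
  by (simp add: Finite_Cartesian_Product.vec_eq_iff matrix_matrix_mult_def)

lemma mat_of_cart_mpow:
  fixes A :: "real^'n^'n"
  shows "mat_of_cart (map_matrix complex_of_real (mpow A k)) =
    mat_of_cart (map_matrix complex_of_real A) ^\<^sub>m k"
proof (induction k)
  case 0
  have "map_matrix complex_of_real (mat 1) = (mat 1 :: complex^'n^'n)"
    by (simp add: Finite_Cartesian_Product.vec_eq_iff Finite_Cartesian_Product.mat_def)
  then show ?case
    by (simp only: mpow.simps mat_of_cart_one) simp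
next
  case (Suc k)
  then show ?case
    by (simp del: mpow.simps add: mpow_Suc_right map_matrix_of_real_mult mat_of_cart_mult)
qed

section \<open>Bounded and vanishing matrix powers\<close>

lemma norm_matrix_le_entry_bound:
  fixes X :: "real^'m^'n"
  assumes "\<And>i j. \<bar>X $ i $ j\<bar> \<le> c"
  shows "norm X \<le> real CARD('n) * real CARD('m) * c"
proof -
  have "norm X \<le> (\<Sum>i\<in>UNIV. norm (X $ i))"
    unfolding norm_vec_def by (rule L2_set_le_sum) simp
  also have "\<dots> \<le> (\<Sum>i\<in>(UNIV :: 'n set). real CARD('m) * c)"
  proof (rule sum_mono)
    fix i
    have "norm (X $ i) \<le> (\<Sum>j\<in>UNIV. \<bar>X $ i $ j\<bar>)"
      by (rule norm_le_l1_cart)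
    also have "\<dots> \<le> (\<Sum>j\<in>(UNIV :: 'm set). c)"
      by (rule sum_mono) (rule assms)
    finally show "norm (X $ i) \<le> real CARD('m) * c"
      by simp
  qed
  finally show ?thesis
    by simp
qed

lemma bounded_range_mpow:
  fixes A :: "real^'n^'n"
  assumes "spectral_radius A < 1"
  shows "bounded (range (mpow A))"
proof -
  define MA where "MA = mat_of_cart (map_matrix complex_of_real A)"
  have MA: "MA \<in> carrier_mat CARD('n) CARD('n)"
    unfolding MA_def by simp
  have "Spectral_Radius.spectral_radius MA < 1"
    unfolding MA_def spectral_radius_mat_of_cart by (rule assms)
  then obtain c where c: "\<And>k. norm_bound (MA ^\<^sub>m k) c"
    using spectral_radius_jnf_norm_bound_less_1_upper_triangular[OF MA] by blast
  have "\<bar>mpow A k $ a $ b\<bar> \<le> c" for k a b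
  proof -
    obtain i where i: "i < CARD('n)" "cart_index i = a"
      using ex_cart_index by blast
    obtain j where j: "j < CARD('n)" "cart_index j = b"
      using ex_cart_index by blast
    have entry: "(MA ^\<^sub>m k) $$ (i, j) = complex_of_real (mpow A k $ a $ b)"
      unfolding MA_def mat_of_cart_mpow[symmetric] using i j by simp
    have "MA ^\<^sub>m k \<in> carrier_mat CARD('n) CARD('n)"
      using MA by (rule pow_carrier_mat)
    then have "norm ((MA ^\<^sub>m k) $$ (i, j)) \<le> c"
      using c[of k] i(1) j(1) unfolding norm_bound_def carrier_mat_def by simp
    then show ?thesis
      unfolding entry by simp
  qed
  then have "norm (mpow A k) \<le> real CARD('n) * real CARD('n) * c" for k
    by (rule norm_matrix_le_entry_bound)
  then show ?thesis
    unfolding bounded_iff by (intro exI ballI) auto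
qed

lemma tendsto_mpow_scaleR_zero:
  assumes "bounded (range (mpow T))" and "\<bar>c\<bar> < 1"
  shows "mpow (c *\<^sub>R T) \<longlonglongrightarrow> 0"
proof -
  obtain B where "\<forall>X \<in> range (mpow T). norm X \<le> B"
    using assms(1) unfolding bounded_iff by blast
  then have B: "norm (mpow T k) \<le> B" for k
    by simp
  have bound: "\<forall>k. norm (mpow (c *\<^sub>R T) k) \<le> \<bar>c\<bar> ^ k * B"
  proof
    fix k
    have "norm (mpow (c *\<^sub>R T) k) = \<bar>c\<bar> ^ k * norm (mpow T k)"
      by (simp only: mpow_scaleR norm_scaleR power_abs)
    also have "\<dots> \<le> \<bar>c\<bar> ^ k * B"
      by (rule mult_left_mono[OF B]) simp
    finally show "norm (mpow (c *\<^sub>R T) k) \<le> \<bar>c\<bar> ^ k * B" .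
  qed
  have "(\<lambda>k. \<bar>c\<bar> ^ k) \<longlonglongrightarrow> 0"
    using assms(2) by (intro LIMSEQ_power_zero) simp
  then have "(\<lambda>k. \<bar>c\<bar> ^ k * B) \<longlonglongrightarrow> 0"
    by (rule tendsto_mult_left_zero)
  then show ?thesis
    by (rule Lim_null_comparison[OF always_eventually[OF bound]])
qed

section \<open>The discrete Lyapunov equation\<close>

lemma congruence_iterate:
  fixes T :: "real^'n^'n"
  assumes "\<And>k. Z (Suc k) = T ** Z k ** transpose T"
  shows "Z k = mpow T k ** Z 0 ** transpose (mpow T k)"
proof (induction k)
  case (Suc k)
  then show ?case
    using assms by (simp add: matrix_mul_assoc matrix_transpose_mul)
qed simp

lemma tendsto_congruence_zero:
  fixes T :: "real^'n^'n"
  assumes "mpow T \<longlonglongrightarrow> 0"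
  shows "(\<lambda>k. mpow T k ** D ** transpose (mpow T k)) \<longlonglongrightarrow> 0"
proof -
  have "(\<lambda>k. mpow T k ** D ** transpose (mpow T k)) \<longlonglongrightarrow> 0 ** D ** transpose 0"
    by (intro bounded_bilinear.tendsto[OF bounded_bilinear_matrix_mult]
        bounded_linear.tendsto[OF bounded_linear_transpose] tendsto_const assms)
  then show ?thesis
    by simp
qed

lemma lyap_fixpoint_unique:
  fixes T :: "real^'n^'n"
  assumes T: "mpow T \<longlonglongrightarrow> 0"
    and V: "V = T ** V ** transpose T + U" and W: "W = T ** W ** transpose T + U"
  shows "V = W"
proof -
  have "V - W = (T ** V ** transpose T + U) - (T ** W ** transpose T + U)"
    using V W by (rule arg_cong2)
  also have "\<dots> = T ** (V - W) ** transpose T"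
    by (simp add: linear_diff[OF linear_congruence])
  finally have "(\<lambda>k::nat. V - W) = (\<lambda>k. mpow T k ** (V - W) ** transpose (mpow T k))"
    using congruence_iterate[of "\<lambda>_. V - W" T] by simp
  then have "(\<lambda>k::nat. V - W) \<longlonglongrightarrow> 0"
    using tendsto_congruence_zero[OF T] by simp
  then show ?thesis
    by (simp add: LIMSEQ_const_iff)
qed

lemma lyap_fixpoint_exists:
  fixes T :: "real^'n^'n"
  assumes T: "mpow T \<longlonglongrightarrow> 0"
  shows "\<exists>V. V = T ** V ** transpose T + U"
proof -
  define F where "F V = V - T ** V ** transpose T" for V :: "real^'n^'n"
  have F: "linear F"
    unfolding F_def by (intro linear_compose_sub linear_ident linear_congruence)
  have "inj F"
  proof (rule injI)
    fix V W assume "F V = F W"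
    then have "W = T ** W ** transpose T + F V"
      unfolding F_def by simp
    moreover have "V = T ** V ** transpose T + F V"
      unfolding F_def by simp
    ultimately show "V = W"
      by (rule lyap_fixpoint_unique[OF T, rotated])
  qed
  then obtain V where "F V = U"
    using linear_inj_imp_surj[OF F] by (metis surjD)
  then show ?thesis
    unfolding F_def by (metis add.commute diff_add_cancel)
qed

lemma lyap_eq:
  fixes T :: "real^'n^'n"
  assumes "mpow T \<longlonglongrightarrow> 0"
  shows "lyap T U = T ** lyap T U ** transpose T + U"
  unfolding lyap_def
  by (rule theI') (use lyap_fixpoint_exists[OF assms] lyap_fixpoint_unique[OF assms] in blast)

lemma lyap_unique:
  fixes T :: "real^'n^'n"
  assumes "mpow T \<longlonglongrightarrow> 0" and "V = T ** V ** transpose T + U"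
  shows "lyap T U = V"
  using lyap_fixpoint_unique[OF assms(1) lyap_eq[OF assms(1)] assms(2)] .

lemma lyap_linear_combination:
  fixes T :: "real^'n^'n"
  assumes T: "mpow T \<longlonglongrightarrow> 0"
  shows "lyap T (a *\<^sub>R U + b *\<^sub>R V) = a *\<^sub>R lyap T U + b *\<^sub>R lyap T V"
proof (rule lyap_unique[OF T])
  have "a *\<^sub>R lyap T U + b *\<^sub>R lyap T V =
      a *\<^sub>R (T ** lyap T U ** transpose T + U) + b *\<^sub>R (T ** lyap T V ** transpose T + V)"
    by (simp only: lyap_eq[OF T, symmetric])
  also have "\<dots> = T ** (a *\<^sub>R lyap T U + b *\<^sub>R lyap T V) ** transpose T + (a *\<^sub>R U + b *\<^sub>R V)"
    by (simp add: linear_add[OF linear_congruence] linear_scale[OF linear_congruence] algebra_simps)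
  finally show "a *\<^sub>R lyap T U + b *\<^sub>R lyap T V =
      T ** (a *\<^sub>R lyap T U + b *\<^sub>R lyap T V) ** transpose T + (a *\<^sub>R U + b *\<^sub>R V)" .
qed

lemma tendsto_lyap:
  fixes T :: "real^'n^'n"
  assumes T: "mpow T \<longlonglongrightarrow> 0" and X: "\<And>k. X (Suc k) = T ** X k ** transpose T + U"
  shows "X \<longlonglongrightarrow> lyap T U"
proof -
  define L where "L = lyap T U"
  have "X (Suc k) - L = T ** (X k - L) ** transpose T" for k
  proof -
    have "X (Suc k) - L = (T ** X k ** transpose T + U) - (T ** L ** transpose T + U)"
      unfolding L_def by (simp only: X lyap_eq[OF T, symmetric])
    also have "\<dots> = T ** (X k - L) ** transpose T"
      by (simp add: linear_diff[OF linear_congruence])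
    finally show ?thesis .
  qed
  then have "(\<lambda>k. X k - L) = (\<lambda>k. mpow T k ** (X 0 - L) ** transpose (mpow T k))"
    using congruence_iterate[of "\<lambda>k. X k - L" T] by blast
  then have "(\<lambda>k. X k - L) \<longlonglongrightarrow> 0"
    using tendsto_congruence_zero[OF T] by simp
  then show ?thesis
    unfolding L_def by (rule LIM_zero_cancel)
qed

section \<open>The expected error covariance\<close>

lemma Pseq_cong:
  "(\<And>l. 1 \<le> l \<Longrightarrow> l \<le> k \<Longrightarrow> lam l \<omega> = lam' l \<omega>' \<and> u l \<omega> = u' l \<omega>') \<Longrightarrow>
   Pseq A Q Pbar P0 lam u k \<omega> = Pseq A Q Pbar P0 lam' u' k \<omega>'"
  by (induction k) auto

lemma Pseq_in_orbits:
  fixes A Q :: "real^'n^'n"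
  defines "f \<equiv> \<lambda>X. A ** X ** transpose A + Q"
  shows "Pseq A Q Pbar P0 lam u k \<omega> \<in> insert ((f ^^ k) P0) ((\<lambda>j. (f ^^ j) Pbar) ` {..<k})"
proof (induction k)
  case (Suc k)
  show ?case
  proof (cases "lam (Suc k) \<omega> = 1 \<and> u (Suc k) \<omega> = 1")
    case True
    then have "Pseq A Q Pbar P0 lam u (Suc k) \<omega> = (f ^^ 0) Pbar"
      by simp
    moreover have "(0::nat) \<in> {..<Suc k}"
      by simp
    ultimately show ?thesis
      by blast
  next
    case False
    then have P_Suc: "Pseq A Q Pbar P0 lam u (Suc k) \<omega> = f (Pseq A Q Pbar P0 lam u k \<omega>)"
      by (auto simp: f_def)
    from Suc consider "Pseq A Q Pbar P0 lam u k \<omega> = (f ^^ k) P0"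
      | j where "j < k" "Pseq A Q Pbar P0 lam u k \<omega> = (f ^^ j) Pbar"
      by blast
    then show ?thesis
    proof cases
      case 1
      then show ?thesis
        using P_Suc by simp
    next
      case (2 j)
      then have "Pseq A Q Pbar P0 lam u (Suc k) \<omega> = (f ^^ Suc j) Pbar"
        using P_Suc by simp
      then show ?thesis
        using \<open>j < k\<close> by (auto intro!: image_eqI[where x="Suc j"])
    qed
  qed
qed simp

lemma bounded_range_Pseq: "bounded (range (Pseq A Q Pbar P0 lam u k))"
proof -
  define f where "f = (\<lambda>X. A ** X ** transpose A + Q)"
  have "range (Pseq A Q Pbar P0 lam u k) \<subseteq> insert ((f ^^ k) P0) ((\<lambda>j. (f ^^ j) Pbar) ` {..<k})"
    unfolding f_def by (rule image_subsetI) (rule Pseq_in_orbits)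
  then show ?thesis
    by (rule bounded_subset[OF finite_imp_bounded, rotated]) simp
qed

context prob_space
begin

lemma borel_measurable_restrict_family:
  fixes X :: "'i \<Rightarrow> 'a \<Rightarrow> 'b::countable" and \<phi> :: "('i \<Rightarrow> 'b) \<Rightarrow> 'c::topological_space"
  assumes "finite J" and "\<And>i. i \<in> J \<Longrightarrow> X i \<in> M \<rightarrow>\<^sub>M count_space UNIV"
  shows "(\<lambda>\<omega>. \<phi> (restrict (\<lambda>i. X i \<omega>) J)) \<in> borel_measurable M"
proof -
  have "(\<lambda>\<omega>. restrict (\<lambda>i. X i \<omega>) J) \<in> M \<rightarrow>\<^sub>M PiM J (\<lambda>_. count_space UNIV)"
    using assms(2) by (rule measurable_restrict)
  moreover have "\<phi> \<in> PiM J (\<lambda>_. count_space UNIV) \<rightarrow>\<^sub>M borel"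
    using assms(1) by (simp add: count_space_PiM_finite)
  ultimately show ?thesis
    by (rule measurable_compose)
qed

lemma indep_var_restrict_compose:
  fixes X :: "'i \<Rightarrow> 'a \<Rightarrow> 'b::countable"
    and \<phi> \<psi> :: "('i \<Rightarrow> 'b) \<Rightarrow> 'c::topological_space"
  assumes "indep_vars (\<lambda>_. count_space UNIV) X I"
    and "J \<inter> K = {}" "J \<subseteq> I" "K \<subseteq> I" "finite J" "finite K"
  shows "indep_var borel (\<lambda>\<omega>. \<phi> (restrict (\<lambda>i. X i \<omega>) J)) borel (\<lambda>\<omega>. \<psi> (restrict (\<lambda>i. X i \<omega>) K))"
proof -
  have "indep_var borel (\<phi> \<circ> (\<lambda>\<omega>. restrict (\<lambda>i. X i \<omega>) J)) borel (\<psi> \<circ> (\<lambda>\<omega>. restrict (\<lambda>i. X i \<omega>) K))"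
    by (rule indep_var_compose[OF indep_var_restrict[OF assms(1-4)]])
      (simp_all add: assms(5,6) count_space_PiM_finite)
  then show ?thesis
    by (simp add: comp_def)
qed

lemma
  fixes f :: "'a \<Rightarrow> nat"
  assumes f: "f \<in> M \<rightarrow>\<^sub>M count_space UNIV" and f01: "\<And>\<omega>. \<omega> \<in> space M \<Longrightarrow> f \<omega> \<in> {0, 1}"
  shows integrable_zero_one_var: "integrable M (\<lambda>\<omega>. real (f \<omega>))"
    and integral_zero_one_var: "(\<integral>\<omega>. real (f \<omega>) \<partial>M) = 1 - prob {\<omega> \<in> space M. f \<omega> = 0}"
proof -
  have "AE \<omega> in M. norm (real (f \<omega>)) \<le> 1"
  proof (rule AE_I2)
    fix \<omega> assume "\<omega> \<in> space M"
    then show "norm (real (f \<omega>)) \<le> 1"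
      using f01 by force
  qed
  then show "integrable M (\<lambda>\<omega>. real (f \<omega>))"
    by (rule integrable_const_bound) (rule measurable_compose[OF f], simp)
  define S where "S = {\<omega> \<in> space M. f \<omega> = 0}"
  have S: "S \<in> events"
    unfolding S_def using f by measurable
  have "real (f \<omega>) = 1 - indicator S \<omega>" if "\<omega> \<in> space M" for \<omega>
    using f01[OF that] that by (auto simp: S_def)
  then have "(\<integral>\<omega>. real (f \<omega>) \<partial>M) = (\<integral>\<omega>. 1 - indicator S \<omega> \<partial>M)"
    by (rule Bochner_Integration.integral_cong[OF refl])
  also have "\<dots> = (\<integral>\<omega>. 1 \<partial>M) - (\<integral>\<omega>. indicator S \<omega> \<partial>M)"
    using S by (intro Bochner_Integration.integral_diff)
      (auto intro!: integrable_real_indicator simp: less_top[symmetric])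
  also have "\<dots> = 1 - prob S"
    using S by (simp add: prob_space)
  finally show "(\<integral>\<omega>. real (f \<omega>) \<partial>M) = 1 - prob {\<omega> \<in> space M. f \<omega> = 0}"
    unfolding S_def .
qed

lemma integral_scaleR_indep_var:
  fixes r :: "'a \<Rightarrow> real" and G :: "'a \<Rightarrow> 'b::euclidean_space"
  assumes indep: "\<And>b. b \<in> Basis \<Longrightarrow> indep_var borel r borel (\<lambda>\<omega>. G \<omega> \<bullet> b)"
    and r: "integrable M r" and G: "integrable M G"
  shows "integrable M (\<lambda>\<omega>. r \<omega> *\<^sub>R G \<omega>)"
    and "(\<integral>\<omega>. r \<omega> *\<^sub>R G \<omega> \<partial>M) = integral\<^sup>L M r *\<^sub>R integral\<^sup>L M G"
proof -
  have G_b: "integrable M (\<lambda>\<omega>. G \<omega> \<bullet> b)" for b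
    using G by simp
  have int_b: "integrable M (\<lambda>\<omega>. r \<omega> * (G \<omega> \<bullet> b))" if "b \<in> Basis" for b
    using indep_var_integrable[OF indep[OF that] r G_b] .
  have "(\<lambda>\<omega>. r \<omega> *\<^sub>R G \<omega>) = (\<lambda>\<omega>. \<Sum>b\<in>Basis. (r \<omega> * (G \<omega> \<bullet> b)) *\<^sub>R b)"
    by (simp add: euclidean_representation scaleR_sum_right[symmetric] flip: scaleR_scaleR)
  moreover have "integrable M (\<lambda>\<omega>. \<Sum>b\<in>Basis. (r \<omega> * (G \<omega> \<bullet> b)) *\<^sub>R b)"
    by (intro Bochner_Integration.integrable_sum integrable_scaleR_left int_b)
  ultimately show int: "integrable M (\<lambda>\<omega>. r \<omega> *\<^sub>R G \<omega>)"
    by simp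
  show "(\<integral>\<omega>. r \<omega> *\<^sub>R G \<omega> \<partial>M) = integral\<^sup>L M r *\<^sub>R integral\<^sup>L M G"
  proof (rule euclidean_eqI)
    fix b :: 'b
    assume "b \<in> Basis"
    have "(\<integral>\<omega>. r \<omega> *\<^sub>R G \<omega> \<partial>M) \<bullet> b = (\<integral>\<omega>. r \<omega> * (G \<omega> \<bullet> b) \<partial>M)"
      using int by (simp add: integral_inner_left[symmetric])
    also have "\<dots> = integral\<^sup>L M r * (\<integral>\<omega>. G \<omega> \<bullet> b \<partial>M)"
      by (rule indep_var_lebesgue_integral[OF indep[OF \<open>b \<in> Basis\<close>] r G_b])
    also have "\<dots> = (integral\<^sup>L M r *\<^sub>R integral\<^sup>L M G) \<bullet> b"
      using G by (simp add: integral_inner_left)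
    finally show "(\<integral>\<omega>. r \<omega> *\<^sub>R G \<omega> \<partial>M) \<bullet> b = (integral\<^sup>L M r *\<^sub>R integral\<^sup>L M G) \<bullet> b" .
  qed
qed

lemma
  fixes A Q :: "real^'n^'n"
  assumes "integrable M X"
  shows integrable_congruence_add: "integrable M (\<lambda>\<omega>. A ** X \<omega> ** transpose A + Q)"
    and integral_congruence_add:
      "(\<integral>\<omega>. A ** X \<omega> ** transpose A + Q \<partial>M) = A ** integral\<^sup>L M X ** transpose A + Q"
proof -
  note int = integrable_bounded_linear[OF bounded_linear_congruence assms]
  then show "integrable M (\<lambda>\<omega>. A ** X \<omega> ** transpose A + Q)"
    by simp
  show "(\<integral>\<omega>. A ** X \<omega> ** transpose A + Q \<partial>M) = A ** integral\<^sup>L M X ** transpose A + Q"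
    using int by (simp add: Bochner_Integration.integral_add prob_space
        integral_bounded_linear[OF bounded_linear_congruence assms])
qed

end

text \<open>The packet arrivals \<open>lam k\<close> and the sensor decisions \<open>u k\<close>
  (\<open>u k = 0\<close> when noise is sent) are indexed jointly by \<open>Inl k\<close> and \<open>Inr k\<close>.\<close>

locale packet_losses = prob_space +
  fixes lam u :: "nat \<Rightarrow> 'a \<Rightarrow> nat" and gbar mu :: real
  assumes indep_lam_u:
      "indep_vars (\<lambda>_. count_space UNIV) (\<lambda>i. case i of Inl k \<Rightarrow> lam k | Inr k \<Rightarrow> u k)
        ({1..} <+> {1..})"
    and lam_01: "\<And>k \<omega>. k \<ge> 1 \<Longrightarrow> \<omega> \<in> space M \<Longrightarrow> lam k \<omega> \<in> {0, 1}"
    and u_01: "\<And>k \<omega>. k \<ge> 1 \<Longrightarrow> \<omega> \<in> space M \<Longrightarrow> u k \<omega> \<in> {0, 1}"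
    and prob_lam_0: "\<And>k. k \<ge> 1 \<Longrightarrow> prob {\<omega> \<in> space M. lam k \<omega> = 0} = gbar"
    and prob_u_0: "\<And>k. k \<ge> 1 \<Longrightarrow> prob {\<omega> \<in> space M. u k \<omega> = 0} = mu"
begin

definition channel :: "nat + nat \<Rightarrow> 'a \<Rightarrow> nat" where
  "channel i = (case i of Inl k \<Rightarrow> lam k | Inr k \<Rightarrow> u k)"

lemma indep_vars_channel: "indep_vars (\<lambda>_. count_space UNIV) channel ({1..} <+> {1..})"
  using indep_lam_u unfolding channel_def .

lemma measurable_channel: "i \<in> {1..} <+> {1..} \<Longrightarrow> channel i \<in> M \<rightarrow>\<^sub>M count_space UNIV"
  using indep_vars_channel unfolding indep_vars_def by blast

lemma measurable_lam: "k \<ge> 1 \<Longrightarrow> lam k \<in> M \<rightarrow>\<^sub>M count_space UNIV"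
  using measurable_channel[OF InlI, of k] by (simp add: channel_def)

lemma measurable_u: "k \<ge> 1 \<Longrightarrow> u k \<in> M \<rightarrow>\<^sub>M count_space UNIV"
  using measurable_channel[OF InrI, of k] by (simp add: channel_def)

lemma
  assumes "k \<ge> 1"
  shows integrable_lam_mult_u: "integrable M (\<lambda>\<omega>. real (lam k \<omega>) * real (u k \<omega>))"
    and integral_lam_mult_u: "(\<integral>\<omega>. real (lam k \<omega>) * real (u k \<omega>) \<partial>M) = (1 - gbar) * (1 - mu)"
proof -
  note lam = measurable_lam[OF assms] and u = measurable_u[OF assms]
  note int_lam = integrable_zero_one_var[OF lam lam_01[OF assms]]
    and int_u = integrable_zero_one_var[OF u u_01[OF assms]]
  have "indep_var borel (\<lambda>\<omega>. (\<lambda>x. real (x (Inl k))) (restrict (\<lambda>i. channel i \<omega>) {Inl k}))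
      borel (\<lambda>\<omega>. (\<lambda>x. real (x (Inr k))) (restrict (\<lambda>i. channel i \<omega>) {Inr k}))"
    using assms by (intro indep_var_restrict_compose[OF indep_vars_channel]) auto
  then have indep: "indep_var borel (\<lambda>\<omega>. real (lam k \<omega>)) borel (\<lambda>\<omega>. real (u k \<omega>))"
    by (simp add: channel_def)
  show "integrable M (\<lambda>\<omega>. real (lam k \<omega>) * real (u k \<omega>))"
    using indep int_lam int_u by (rule indep_var_integrable)
  have "(\<integral>\<omega>. real (lam k \<omega>) * real (u k \<omega>) \<partial>M) =
      (\<integral>\<omega>. real (lam k \<omega>) \<partial>M) * (\<integral>\<omega>. real (u k \<omega>) \<partial>M)"
    using indep int_lam int_u by (rule indep_var_lebesgue_integral)
  also have "\<dots> = (1 - gbar) * (1 - mu)"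
    using integral_zero_one_var[OF lam lam_01[OF assms]] integral_zero_one_var[OF u u_01[OF assms]]
      prob_lam_0[OF assms] prob_u_0[OF assms] by simp
  finally show "(\<integral>\<omega>. real (lam k \<omega>) * real (u k \<omega>) \<partial>M) = (1 - gbar) * (1 - mu)" .
qed

(* The window of channel values up to time k itself serves as sample point. *)
lemma Pseq_restrict_channel:
  "Pseq A Q Pbar P0 (\<lambda>l x. x (Inl l)) (\<lambda>l x. x (Inr l)) k
      (restrict (\<lambda>i. channel i \<omega>) ({1..k} <+> {1..k}))
    = Pseq A Q Pbar P0 lam u k \<omega>"
  by (rule Pseq_cong) (auto simp: channel_def)

lemma indep_var_channel_Suc_Pseq:
  fixes \<psi> :: "nat \<Rightarrow> nat \<Rightarrow> 'c::topological_space" and \<phi> :: "real^'n^'n \<Rightarrow> 'c"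
  shows "indep_var borel (\<lambda>\<omega>. \<psi> (lam (Suc k) \<omega>) (u (Suc k) \<omega>))
    borel (\<lambda>\<omega>. \<phi> (Pseq A Q Pbar P0 lam u k \<omega>))"
proof -
  have "indep_var
      borel (\<lambda>\<omega>. (\<lambda>x. \<psi> (x (Inl (Suc k))) (x (Inr (Suc k))))
        (restrict (\<lambda>i. channel i \<omega>) {Inl (Suc k), Inr (Suc k)}))
      borel (\<lambda>\<omega>. (\<lambda>x. \<phi> (Pseq A Q Pbar P0 (\<lambda>l x. x (Inl l)) (\<lambda>l x. x (Inr l)) k x))
        (restrict (\<lambda>i. channel i \<omega>) ({1..k} <+> {1..k})))"
    by (rule indep_var_restrict_compose[OF indep_vars_channel]) auto
  then show ?thesis
    unfolding Pseq_restrict_channel by (simp add: channel_def)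
qed

lemma borel_measurable_Pseq: "Pseq A Q Pbar P0 lam u k \<in> borel_measurable M"
proof -
  have "(\<lambda>\<omega>. Pseq A Q Pbar P0 (\<lambda>l x. x (Inl l)) (\<lambda>l x. x (Inr l)) k
      (restrict (\<lambda>i. channel i \<omega>) ({1..k} <+> {1..k}))) \<in> borel_measurable M"
    by (rule borel_measurable_restrict_family) (auto intro: measurable_channel)
  then show ?thesis
    by (simp only: Pseq_restrict_channel)
qed

lemma integrable_Pseq: "integrable M (Pseq A Q Pbar P0 lam u k)"
proof -
  obtain B where "\<forall>P \<in> range (Pseq A Q Pbar P0 lam u k). norm P \<le> B"
    using bounded_range_Pseq unfolding bounded_iff by blast
  then show ?thesis
    by (intro integrable_const_bound[where B=B] AE_I2 borel_measurable_Pseq) auto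
qed

lemma integral_Pseq_Suc:
  "(\<integral>\<omega>. Pseq A Q Pbar P0 lam u (Suc k) \<omega> \<partial>M) =
     ((1 - gbar) * (1 - mu)) *\<^sub>R Pbar
     + (gbar + (1 - gbar) * mu) *\<^sub>R (A ** (\<integral>\<omega>. Pseq A Q Pbar P0 lam u k \<omega> \<partial>M) ** transpose A + Q)"
proof -
  define r where "r \<omega> = real (lam (Suc k) \<omega>) * real (u (Suc k) \<omega>)" for \<omega>
  define G where "G \<omega> = A ** Pseq A Q Pbar P0 lam u k \<omega> ** transpose A + Q" for \<omega>
  have P_Suc: "Pseq A Q Pbar P0 lam u (Suc k) \<omega> = r \<omega> *\<^sub>R Pbar + (1 - r \<omega>) *\<^sub>R G \<omega>"
    if "\<omega> \<in> space M" for \<omega>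
    using lam_01[of "Suc k" \<omega>] u_01[of "Suc k" \<omega>] that by (auto simp: r_def G_def)
  have indep: "indep_var borel (\<lambda>\<omega>. 1 - r \<omega>) borel (\<lambda>\<omega>. G \<omega> \<bullet> b)" if "b \<in> Basis" for b
    using indep_var_channel_Suc_Pseq[where \<psi>="\<lambda>l v. 1 - real l * real v"
        and \<phi>="\<lambda>P. (A ** P ** transpose A + Q) \<bullet> b"]
    by (simp add: r_def G_def)
  have int_r: "integrable M r"
    unfolding r_def by (rule integrable_lam_mult_u) simp
  have int_1r: "integrable M (\<lambda>\<omega>. 1 - r \<omega>)"
    using int_r by simp
  have int_G: "integrable M G"
    unfolding G_def by (rule integrable_congruence_add[OF integrable_Pseq])
  have E_G: "integral\<^sup>L M G = A ** (\<integral>\<omega>. Pseq A Q Pbar P0 lam u k \<omega> \<partial>M) ** transpose A + Q"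
    unfolding G_def by (rule integral_congruence_add[OF integrable_Pseq])
  have E_r: "integral\<^sup>L M r = (1 - gbar) * (1 - mu)"
    unfolding r_def by (rule integral_lam_mult_u) simp
  have "(\<integral>\<omega>. Pseq A Q Pbar P0 lam u (Suc k) \<omega> \<partial>M) =
      (\<integral>\<omega>. r \<omega> *\<^sub>R Pbar + (1 - r \<omega>) *\<^sub>R G \<omega> \<partial>M)"
    by (rule Bochner_Integration.integral_cong[OF refl P_Suc])
  also have "\<dots> = (\<integral>\<omega>. r \<omega> *\<^sub>R Pbar \<partial>M) + (\<integral>\<omega>. (1 - r \<omega>) *\<^sub>R G \<omega> \<partial>M)"
    using int_r integral_scaleR_indep_var(1)[OF indep int_1r int_G]
    by (intro Bochner_Integration.integral_add) auto
  also have "\<dots> = integral\<^sup>L M r *\<^sub>R Pbar + integral\<^sup>L M (\<lambda>\<omega>. 1 - r \<omega>) *\<^sub>R integral\<^sup>L M G"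
    using int_r integral_scaleR_indep_var(2)[OF indep int_1r int_G]
    by (simp add: integral_scaleR_left)
  also have "\<dots> = ((1 - gbar) * (1 - mu)) *\<^sub>R Pbar
      + (gbar + (1 - gbar) * mu) *\<^sub>R (A ** (\<integral>\<omega>. Pseq A Q Pbar P0 lam u k \<omega> \<partial>M) ** transpose A + Q)"
  proof -
    have "1 - (1 - gbar) * (1 - mu) = gbar + (1 - gbar) * mu"
      by (simp add: algebra_simps)
    then show ?thesis
      using int_r E_r E_G by (simp add: Bochner_Integration.integral_diff prob_space)
  qed
  finally show ?thesis .
qed

end

theorem lemma2:
  fixes M :: "'a measure"
    and A Q Pbar P0 :: "real^'n^'n"
    and C :: "real^'n^'m"
    and R :: "real^'m^'m"
    and gbar mu :: real
    and lam u :: "nat \<Rightarrow> 'a \<Rightarrow> nat"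
  assumes "prob_space M"
    and "spectral_radius A < 1"
    and "pos_def Q" and "pos_def R"
    and "observable A C" and "controllable A (msqrt Q)"
    and "pos_def Pbar" and "Pbar = riccati A C Q R Pbar"
    and "stabilizing A C Q R Pbar"
    and "0 < gbar" and "gbar < 1" and "0 < mu" and "mu < 1"
    and "prob_space.indep_vars M (\<lambda>_. count_space UNIV)
           (\<lambda>i. case i of Inl k \<Rightarrow> lam k | Inr k \<Rightarrow> u k) ({1..} <+> {1..})"
    and "\<And>k \<omega>. k \<ge> 1 \<Longrightarrow> \<omega> \<in> space M \<Longrightarrow> lam k \<omega> \<in> {0, 1}"
    and "\<And>k \<omega>. k \<ge> 1 \<Longrightarrow> \<omega> \<in> space M \<Longrightarrow> u k \<omega> \<in> {0, 1}"
    and "\<And>k. k \<ge> 1 \<Longrightarrow> measure M {\<omega> \<in> space M. lam k \<omega> = 0} = gbar"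
    and "\<And>k. k \<ge> 1 \<Longrightarrow> measure M {\<omega> \<in> space M. u k \<omega> = 0} = mu"
    and "pos_semidef P0"
  shows "(\<lambda>k. integral\<^sup>L M (Pseq A Q Pbar P0 lam u k))
     \<longlonglongrightarrow> (let q = gbar + (1 - gbar) * mu in
          ((1 - gbar) * (1 - mu)) *\<^sub>R lyap (sqrt q *\<^sub>R A) Pbar
          + q *\<^sub>R lyap (sqrt q *\<^sub>R A) Q)"
proof -
  have losses: "packet_losses M lam u gbar mu"
    using assms(1,14-18) by (simp add: packet_losses_def packet_losses_axioms_def)
  define q where "q = gbar + (1 - gbar) * mu"
  define T where "T = sqrt q *\<^sub>R A"
  define E where "E = (\<lambda>k. integral\<^sup>L M (Pseq A Q Pbar P0 lam u k))"
  have "(1 - gbar) * mu < 1 - gbar" and "0 \<le> (1 - gbar) * mu"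
    using mult_strict_left_mono[of mu 1 "1 - gbar"] assms(11-13) by simp_all
  then have q: "0 \<le> q" "q < 1"
    using assms(10) unfolding q_def by linarith+
  have T: "mpow T \<longlonglongrightarrow> 0"
    unfolding T_def using bounded_range_mpow[OF assms(2)]
    by (rule tendsto_mpow_scaleR_zero) (use q in simp)
  have "E (Suc k) = T ** E k ** transpose T + (((1 - gbar) * (1 - mu)) *\<^sub>R Pbar + q *\<^sub>R Q)" for k
    using q unfolding E_def T_def congruence_scaleR packet_losses.integral_Pseq_Suc[OF losses]
      q_def[symmetric]
    by (simp add: scaleR_add_right ac_simps)
  then have "E \<longlonglongrightarrow> lyap T (((1 - gbar) * (1 - mu)) *\<^sub>R Pbar + q *\<^sub>R Q)"
    by (rule tendsto_lyap[OF T])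
  then show ?thesis
    unfolding E_def Let_def q_def[symmetric] T_def[symmetric] lyap_linear_combination[OF T] .
qed

end
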